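(* Let $K\subseteq\mathbb{R}^{n}$ be compact and let $T\subseteq\mathbb{R}^{n}$ be compact with non-empty interior. Then \[ M_{\omega}(K,T)=M^{*}(K,T)=N^{*}(K,-T). \]
   Context: $\mathbbm{1}_A$ denotes the indicator function of $A$. $\mathcal{D}_{+}^{n}$ is the set of non-negative finite discrete measures on $\mathbb{R}^n$ (finite sums $\sum_i\omega_i\delta_{x_i}$ with $\omega_i\ge 0$), and $\mathcal{B}_{+}^{n}$ the set of non-negative regular Borel measures on $\mathbb{R}^n$. For a measure $\nu$, $(\nu*\mathbbm{1}_T)(x)=\int_{\mathbb{R}^n}\mathbbm{1}_T(x-y)\,d\nu(y)$. Define $N^{*}(K,T)=\inf\{\mu(\mathbb{R}^n): \mu\in\mathcal{B}_+^n,\ \mu*\mathbbm{1}_T\ge\mathbbm{1}_K \text{ on } \mathbb{R}^n\}$, $M_{\omega}(K,T)=\sup\{\nu(K): \nu\in\mathcal{D}_+^n,\ \nu*\mathbbm{1}_T\le 1 \text{ on } \mathbb{R}^n\}$, $M^{*}(K,T)=\sup\{\mu(K): \mu\in\mathcal{B}_+^n,\ \mu*\mathbbm{1}_T\le 1 \text{ on } \mathbb{R}^n\}$. *)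

theory Defs
  imports "HOL-Analysis.Analysis"
begin

definition conv_ind :: "'a::euclidean_space measure \<Rightarrow> 'a set \<Rightarrow> 'a \<Rightarrow> ennreal" where
  "conv_ind \<mu> T x = (\<integral>\<^sup>+ y. indicator T (x - y) \<partial>\<mu>)"

definition regular_borel :: "'a::euclidean_space measure \<Rightarrow> bool" where
  "regular_borel \<mu> \<longleftrightarrow> sets \<mu> = sets borel \<and>
     (\<forall>E \<in> sets borel.
        emeasure \<mu> E = (INF U \<in> {U. open U \<and> E \<subseteq> U}. emeasure \<mu> U) \<and>
        emeasure \<mu> E = (SUP C \<in> {C. compact C \<and> C \<subseteq> E}. emeasure \<mu> C))"

definition N_star :: "'a::euclidean_space set \<Rightarrow> 'a set \<Rightarrow> ennreal" where
  "N_star K T = (INF \<mu> \<in> {\<mu>. regular_borel \<mu> \<and> (\<forall>x. indicator K x \<le> conv_ind \<mu> T x)}.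
                    emeasure \<mu> UNIV)"

definition M_star :: "'a::euclidean_space set \<Rightarrow> 'a set \<Rightarrow> ennreal" where
  "M_star K T = (SUP \<mu> \<in> {\<mu>. regular_borel \<mu> \<and> (\<forall>x. conv_ind \<mu> T x \<le> 1)}. emeasure \<mu> K)"

text \<open>M_omega(K,T): supremum of nu(K) over finite discrete measures
  nu = sum_{x in S} w x delta_x (S finite, w >= 0) with nu*1_T <= 1; here
  (nu*1_T)(y) = sum_{x in S} w x * 1_T(y - x) and nu(K) = sum_{x in S, x in K} w x.\<close>
definition M_omega :: "'a::euclidean_space set \<Rightarrow> 'a set \<Rightarrow> ennreal" where
  "M_omega K T = (SUP (S, w) \<in> {(S, w). finite S \<and> (\<forall>x\<in>S. 0 \<le> (w x :: real)) \<and>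
                     (\<forall>y. (\<Sum>x\<in>S. w x * indicator T (y - x)) \<le> 1)}.
                  ennreal (\<Sum>x\<in>S \<inter> K. w x))"

end

theory Submission
  imports Defs "HOL-Probability.Probability"
begin

text \<open>
  A finite discrete packing is a packing measure, and integrating a covering against a packing
  restricted to K (Fubini) gives weak duality, so M_omega \<le> M* \<le> N*(K, -T). For the converse let
  m = M_omega(K, T) be finite. Maximality of m says that for every positive weighting of a finite
  e-net F of K some translate z + T catches a 1/m fraction of the weight; the multiplicative weights
  method turns this oracle into a list of R translates covering every point of F at least
  R / ((1 + e) m) times. The uniform distributions on these lists, scaled by m, are approximate
  covering measures of mass m. A weak limit as e \<rightarrow> 0 exists by Helly's theorem and satisfies the
  covering condition, which only involves closed sets.
\<close>

section \<open>Discrete measures and weak duality\<close>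

lemma regular_borelI_finite:
  fixes M :: "'a::euclidean_space measure"
  assumes sets: "sets M = sets borel" and fin: "emeasure M UNIV \<noteq> \<infinity>"
  shows "regular_borel M"
proof -
  have fin': "emeasure M (space M) \<noteq> \<infinity>"
    using fin sets_eq_imp_space_eq[OF sets] by simp
  show ?thesis unfolding regular_borel_def
  proof (intro conjI ballI sets)
    fix E :: "'a set" assume E: "E \<in> sets borel"
    have "{U. open U \<and> E \<subseteq> U} = {U. E \<subseteq> U \<and> open U}" by auto
    then show "emeasure M E = (INF U \<in> {U. open U \<and> E \<subseteq> U}. emeasure M U)"
      using outer_regular[OF sets fin' E] by simp
    have "{C. compact C \<and> C \<subseteq> E} = {C. C \<subseteq> E \<and> compact C}" by auto
    then show "emeasure M E = (SUP C \<in> {C. compact C \<and> C \<subseteq> E}. emeasure M C)"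
      using inner_regular[OF sets fin' E] by simp
  qed
qed

definition discrete_measure :: "'a set \<Rightarrow> ('a \<Rightarrow> ennreal) \<Rightarrow> 'a::topological_space measure" where
  "discrete_measure S w = distr (point_measure S w) borel (\<lambda>x. x)"

lemma sets_discrete_measure [simp]: "sets (discrete_measure S w) = sets borel"
  by (simp add: discrete_measure_def)

lemma nn_integral_discrete_measure:
  assumes "finite S" and "f \<in> borel_measurable borel"
  shows "(\<integral>\<^sup>+ x. f x \<partial>discrete_measure S w) = (\<Sum>x\<in>S. w x * f x)"
proof -
  have "(\<lambda>x. x) \<in> measurable (point_measure S w) borel"
    by (simp add: point_measure_def)
  then show ?thesis
    unfolding discrete_measure_def using assms
    by (simp add: nn_integral_distr nn_integral_point_measure_finite)
qed

lemma emeasure_discrete_measure: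
  assumes "finite S" and "A \<in> sets borel"
  shows "emeasure (discrete_measure S w) A = (\<Sum>x\<in>S \<inter> A. w x)"
proof -
  have "(\<lambda>x. x) \<in> measurable (point_measure S w) borel"
    by (simp add: point_measure_def)
  then show ?thesis
    unfolding discrete_measure_def using assms
    by (simp add: emeasure_distr emeasure_point_measure_finite space_point_measure Int_commute)
qed

lemma M_omega_le_M_star:
  fixes K T :: "'a::euclidean_space set"
  assumes "compact K" and "compact T"
  shows "M_omega K T \<le> M_star K T"
  unfolding M_omega_def
proof (rule SUP_least, clarify)
  fix S and w :: "'a \<Rightarrow> real"
  assume S: "finite S" and w: "\<forall>x\<in>S. 0 \<le> w x"
    and packing: "\<forall>y. (\<Sum>x\<in>S. w x * indicator T (y - x)) \<le> 1"
  define \<mu> where "\<mu> = discrete_measure S (\<lambda>x. ennreal (w x))"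
  have K: "K \<in> sets borel" and T: "T \<in> sets borel"
    using assms by (simp_all add: compact_imp_closed)
  have "regular_borel \<mu>"
    using S emeasure_discrete_measure[OF S, of UNIV] by (intro regular_borelI_finite) (simp_all add: \<mu>_def)
  moreover have "conv_ind \<mu> T y \<le> 1" for y
  proof -
    have "(\<lambda>x. indicator T (y - x) :: ennreal) \<in> borel_measurable borel"
      using T by measurable
    then have "conv_ind \<mu> T y = (\<Sum>x\<in>S. ennreal (w x) * indicator T (y - x))"
      unfolding conv_ind_def \<mu>_def using S by (simp add: nn_integral_discrete_measure)
    also have "\<dots> = ennreal (\<Sum>x\<in>S. w x * indicator T (y - x))"
      using w by (subst sum_ennreal[symmetric]) (auto intro!: sum.cong simp: indicator_def ennreal_mult)
    finally show ?thesis using packing by simp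
  qed
  ultimately have "emeasure \<mu> K \<le> M_star K T"
    unfolding M_star_def by (intro SUP_upper) auto
  moreover have "emeasure \<mu> K = ennreal (\<Sum>x\<in>S \<inter> K. w x)"
    unfolding \<mu>_def using S K w by (simp add: emeasure_discrete_measure) (subst sum_ennreal; simp)
  ultimately show "ennreal (\<Sum>x\<in>S \<inter> K. w x) \<le> M_star K T" by simp
qed

lemma indicator_uminus_image_diff:
  fixes T :: "'a::real_vector set"
  shows "indicator (uminus ` T) (x - z) = (indicator T (z - x) :: 'b::zero_neq_one)"
proof -
  have "x - z \<in> uminus ` T \<longleftrightarrow> z - x \<in> T"
    by (metis (no_types, lifting) image_iff minus_diff_eq minus_minus)
  then show ?thesis by (simp add: indicator_def)
qed

text \<open>A ball inside a translate of T has mass at most one, and K is covered by finitely many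
  such balls.\<close>
lemma packing_emeasure_compact_finite:
  fixes K T :: "'a::euclidean_space set"
  assumes K: "compact K" and T: "interior T \<noteq> {}" and sets: "sets \<mu> = sets borel"
    and packing: "\<forall>x. conv_ind \<mu> T x \<le> 1"
  shows "emeasure \<mu> K < \<infinity>"
proof -
  obtain t0 r where r: "r > 0" "ball t0 r \<subseteq> T"
    using T by (meson all_not_in_conv mem_interior)
  have "K \<subseteq> (\<Union>x\<in>K. ball x r)" using r(1) by auto
  then obtain C where C: "C \<subseteq> K" "finite C" "K \<subseteq> (\<Union>x\<in>C. ball x r)"
    using compactE_image[OF K, of K "\<lambda>x. ball x r"] by auto
  have ball: "emeasure \<mu> (ball x r) \<le> 1" for x
  proof -
    have "emeasure \<mu> (ball x r) = (\<integral>\<^sup>+ y. indicator (ball x r) y \<partial>\<mu>)"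
      using sets by (simp add: nn_integral_indicator)
    also have "\<dots> \<le> (\<integral>\<^sup>+ y. indicator T (x + t0 - y) \<partial>\<mu>)"
    proof (intro nn_integral_mono)
      fix y
      have "y \<in> ball x r \<Longrightarrow> x + t0 - y \<in> ball t0 r"
        by (simp add: dist_norm norm_minus_commute algebra_simps)
      then show "indicator (ball x r) y \<le> (indicator T (x + t0 - y) :: ennreal)"
        using r(2) by (auto simp: indicator_def)
    qed
    also have "\<dots> \<le> 1" using packing unfolding conv_ind_def by auto
    finally show ?thesis .
  qed
  have "emeasure \<mu> K \<le> emeasure \<mu> (\<Union>x\<in>C. ball x r)"
    using C sets by (intro emeasure_mono) auto
  also have "\<dots> \<le> (\<Sum>x\<in>C. emeasure \<mu> (ball x r))"
    using C sets by (intro emeasure_subadditive_finite) auto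
  also have "\<dots> \<le> (\<Sum>x\<in>C. 1)" by (intro sum_mono ball)
  also have "\<dots> < \<infinity>" by (simp add: of_nat_less_top)
  finally show ?thesis .
qed

text \<open>Weak duality: integrate the covering inequality for \<nu> against \<mu> restricted to K and swap
  the order of integration.\<close>
lemma packing_le_covering:
  fixes K T :: "'a::euclidean_space set"
  assumes K: "compact K" and T: "compact T" "interior T \<noteq> {}"
    and sets_\<mu>: "sets \<mu> = sets borel" and packing: "\<forall>x. conv_ind \<mu> T x \<le> 1"
    and sets_\<nu>: "sets \<nu> = sets borel" and covering: "\<forall>x. indicator K x \<le> conv_ind \<nu> (uminus ` T) x"
  shows "emeasure \<mu> K \<le> emeasure \<nu> UNIV"
proof (cases "emeasure \<nu> UNIV = \<infinity>")
  case False
  have space_\<mu>: "space \<mu> = UNIV" and space_\<nu>: "space \<nu> = UNIV"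
    using sets_eq_imp_space_eq[OF sets_\<mu>] sets_eq_imp_space_eq[OF sets_\<nu>] by simp_all
  have K_sets: "K \<in> sets \<mu>" and T_borel: "T \<in> sets borel" and mT_borel: "uminus ` T \<in> sets borel"
    using K T sets_\<mu> by (simp_all add: compact_imp_closed compact_negations)
  define \<mu>K where "\<mu>K = density \<mu> (indicator K)"
  have sets_\<mu>K: "sets \<mu>K = sets borel" unfolding \<mu>K_def using sets_\<mu> by simp
  have "emeasure \<mu>K UNIV = emeasure \<mu> K"
    unfolding \<mu>K_def using K_sets sets.top[of \<mu>] space_\<mu>
    by (subst emeasure_density) (auto simp: nn_integral_indicator)
  then have "finite_measure \<mu>K"
    using packing_emeasure_compact_finite[OF K T(2) sets_\<mu> packing] sets_eq_imp_space_eq[OF sets_\<mu>K]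
    by (intro finite_measureI) simp
  moreover have "finite_measure \<nu>" using False space_\<nu> by (intro finite_measureI) simp
  ultimately interpret pair_sigma_finite \<mu>K \<nu>
    by (simp add: pair_sigma_finite_def finite_measure.sigma_finite_measure)
  have "sets (\<mu>K \<Otimes>\<^sub>M \<nu>) = sets (borel \<Otimes>\<^sub>M (borel :: 'a measure))"
    using sets_\<mu>K sets_\<nu> by (intro sets_pair_measure_cong) auto
  moreover have "(\<lambda>(x, z). indicator (uminus ` T) (x - z) :: ennreal) \<in> borel_measurable (borel \<Otimes>\<^sub>M borel)"
    using mT_borel by measurable
  ultimately have meas: "(\<lambda>(x, z). indicator (uminus ` T) (x - z) :: ennreal) \<in> borel_measurable (\<mu>K \<Otimes>\<^sub>M \<nu>)"
    using measurable_cong_sets by blast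
  have "emeasure \<mu> K = (\<integral>\<^sup>+ x. indicator K x \<partial>\<mu>)"
    using K_sets by (simp add: nn_integral_indicator)
  also have "\<dots> \<le> (\<integral>\<^sup>+ x. indicator K x * conv_ind \<nu> (uminus ` T) x \<partial>\<mu>)"
  proof (intro nn_integral_mono)
    fix x
    show "indicator K x \<le> indicator K x * conv_ind \<nu> (uminus ` T) x"
      using covering[rule_format, of x] by (cases "x \<in> K") simp_all
  qed
  also have "\<dots> = (\<integral>\<^sup>+ x. \<integral>\<^sup>+ z. indicator (uminus ` T) (x - z) \<partial>\<nu> \<partial>\<mu>K)"
  proof -
    have "borel_measurable \<mu>K = borel_measurable \<mu>"
      using sets_\<mu>K sets_\<mu> by (intro measurable_cong_sets) auto
    moreover from M2.borel_measurable_nn_integral_fst[OF meas]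
    have "(\<lambda>x. conv_ind \<nu> (uminus ` T) x) \<in> borel_measurable \<mu>K"
      by (simp add: conv_ind_def)
    ultimately show ?thesis
      unfolding \<mu>K_def using K_sets by (subst nn_integral_density) (simp_all add: conv_ind_def)
  qed
  also have "\<dots> = (\<integral>\<^sup>+ z. \<integral>\<^sup>+ x. indicator T (z - x) \<partial>\<mu>K \<partial>\<nu>)"
    using Fubini'[OF meas] by (simp add: indicator_uminus_image_diff)
  also have "\<dots> \<le> (\<integral>\<^sup>+ z. 1 \<partial>\<nu>)"
  proof (intro nn_integral_mono)
    fix z
    have "(\<lambda>x. indicator T (z - x) :: ennreal) \<in> borel_measurable borel"
      using T_borel by measurable
    then have "(\<lambda>x. indicator T (z - x) :: ennreal) \<in> borel_measurable \<mu>"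
      by (simp add: measurable_cong_sets[OF sets_\<mu> refl])
    then have "(\<integral>\<^sup>+ x. indicator T (z - x) \<partial>\<mu>K) = (\<integral>\<^sup>+ x. indicator K x * indicator T (z - x) \<partial>\<mu>)"
      unfolding \<mu>K_def using K_sets by (simp add: nn_integral_density)
    also have "\<dots> \<le> (\<integral>\<^sup>+ x. indicator T (z - x) \<partial>\<mu>)"
      by (intro nn_integral_mono) (simp add: indicator_def)
    also have "\<dots> \<le> 1" using packing unfolding conv_ind_def by blast
    finally show "(\<integral>\<^sup>+ x. indicator T (z - x) \<partial>\<mu>K) \<le> 1" .
  qed
  finally show ?thesis using space_\<nu> by simp
qed simp

lemma M_star_le_N_star:
  fixes K T :: "'a::euclidean_space set"
  assumes "compact K" and "compact T" and "interior T \<noteq> {}"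
  shows "M_star K T \<le> N_star K (uminus ` T)"
  unfolding M_star_def N_star_def
proof (intro SUP_least INF_greatest)
  fix \<mu> \<nu> :: "'a measure"
  assume "\<mu> \<in> {\<mu>. regular_borel \<mu> \<and> (\<forall>x. conv_ind \<mu> T x \<le> 1)}"
    and "\<nu> \<in> {\<nu>. regular_borel \<nu> \<and> (\<forall>x. indicator K x \<le> conv_ind \<nu> (uminus ` T) x)}"
  then show "emeasure \<mu> K \<le> emeasure \<nu> UNIV"
    by (intro packing_le_covering[OF assms]) (auto simp: regular_borel_def)
qed

section \<open>Multiplicative weights\<close>

primrec mw_weights :: "real \<Rightarrow> (('b \<Rightarrow> real) \<Rightarrow> 'c) \<Rightarrow> ('c \<Rightarrow> 'b \<Rightarrow> bool) \<Rightarrow> nat \<Rightarrow> 'b \<Rightarrow> real" where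
  "mw_weights \<eta> pick A 0 = (\<lambda>y. 1)"
| "mw_weights \<eta> pick A (Suc t) = (\<lambda>y. mw_weights \<eta> pick A t y *
      (if A (pick (mw_weights \<eta> pick A t)) y then 1 - \<eta> else 1))"

lemma mw_weights_eq:
  "mw_weights \<eta> pick A t y = (1 - \<eta>) ^ card {s\<in>{..<t}. A (pick (mw_weights \<eta> pick A s)) y}"
proof (induction t)
  case (Suc t)
  have "{s\<in>{..<Suc t}. A (pick (mw_weights \<eta> pick A s)) y} =
      {s\<in>{..<t}. A (pick (mw_weights \<eta> pick A s)) y} \<union>
      (if A (pick (mw_weights \<eta> pick A t)) y then {t} else {})"
    by (auto simp: less_Suc_eq)
  then show ?case using Suc by (simp add: card_insert_if)
qed simp

text \<open>Discounting the covered points by 1 - \<eta> shrinks the total weight by the factor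
  1 - \<eta>/m in each round.\<close>
lemma mw_weights_sum_le:
  fixes F :: "'b set" and m \<eta> :: real
  assumes F: "finite F" and m: "m \<ge> 1" and \<eta>: "0 < \<eta>" "\<eta> < 1"
    and pick: "\<And>W. \<forall>y\<in>F. W y > 0 \<Longrightarrow> (\<Sum>y\<in>F. W y) / m \<le> (\<Sum>y\<in>F. if A (pick W) y then W y else 0)"
  shows "(\<Sum>y\<in>F. mw_weights \<eta> pick A t y) \<le> card F * (1 - \<eta> / m) ^ t"
proof (induction t)
  case (Suc t)
  let ?W = "mw_weights \<eta> pick A t" and ?covered = "\<lambda>y. if A (pick (mw_weights \<eta> pick A t)) y then mw_weights \<eta> pick A t y else 0"
  have pos: "\<forall>y\<in>F. ?W y > 0"
    using \<eta> by (simp add: mw_weights_eq)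
  have "(\<Sum>y\<in>F. mw_weights \<eta> pick A (Suc t) y) = (\<Sum>y\<in>F. ?W y - \<eta> * ?covered y)"
    by (intro sum.cong) (simp_all add: algebra_simps)
  also have "\<dots> = (\<Sum>y\<in>F. ?W y) - \<eta> * (\<Sum>y\<in>F. ?covered y)"
    by (simp add: sum_subtractf sum_distrib_left)
  also have "\<dots> \<le> (\<Sum>y\<in>F. ?W y) - \<eta> * ((\<Sum>y\<in>F. ?W y) / m)"
    using pick[OF pos] \<eta> by (intro diff_left_mono mult_left_mono) auto
  also have "\<dots> = (1 - \<eta> / m) * (\<Sum>y\<in>F. ?W y)" by (simp add: algebra_simps)
  also have "\<dots> \<le> (1 - \<eta> / m) * (card F * (1 - \<eta> / m) ^ t)"
    using Suc m \<eta> by (intro mult_left_mono) (auto simp: field_simps)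
  finally show ?case by (simp add: algebra_simps)
qed simp

text \<open>Take logarithms and use -\<eta> - 2 \<eta>^2 \<le> ln (1 - \<eta>) and ln (1 - \<eta>/m) \<le> -\<eta>/m.\<close>
lemma mw_rounds_le_hits:
  fixes m \<eta> \<epsilon> :: real and c R N :: nat
  assumes m: "m \<ge> 1" and \<epsilon>: "\<epsilon> > 0" and \<eta>: "0 < \<eta>" "\<eta> \<le> 1/2" "4 * \<eta> \<le> \<epsilon>"
    and N: "N \<ge> 1" and R: "2 * m * (1 + \<epsilon>) * ln (real N) \<le> real R * \<epsilon> * \<eta>"
    and bound: "(1 - \<eta>) ^ c \<le> real N * (1 - \<eta> / m) ^ R"
  shows "real R \<le> (1 + \<epsilon>) * m * real c"
proof -
  have pos: "0 < 1 - \<eta>" "0 < 1 - \<eta> / m" using \<eta> m by (simp_all add: field_simps)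
  have "ln ((1 - \<eta>) ^ c) \<le> ln (N * (1 - \<eta> / m) ^ R)"
    using bound pos N by (subst ln_le_cancel_iff) auto
  moreover have "ln (N * (1 - \<eta> / m) ^ R) = ln N + R * ln (1 - \<eta> / m)"
    using pos N by (subst ln_mult) (auto simp: ln_realpow)
  ultimately have "c * ln (1 - \<eta>) \<le> ln N + R * ln (1 - \<eta> / m)"
    using pos by (simp add: ln_realpow)
  also have "\<dots> \<le> ln N - R * (\<eta> / m)"
    using mult_left_mono[OF ln_le_minus_one[OF pos(2)], of "real R"] by simp
  finally have upper: "c * ln (1 - \<eta>) \<le> ln N - R * (\<eta> / m)" .
  have "- \<eta> - 2 * \<eta>\<^sup>2 \<le> ln (1 - \<eta>)"
    using \<eta> by (intro ln_one_minus_pos_lower_bound) auto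
  moreover have "2 * \<eta>\<^sup>2 \<le> \<eta> * (\<epsilon> / 2)"
    using \<eta> by (simp add: power2_eq_square)
  ultimately have "- (\<eta> * (1 + \<epsilon> / 2)) \<le> ln (1 - \<eta>)"
    by (simp add: algebra_simps)
  then have "c * - (\<eta> * (1 + \<epsilon> / 2)) \<le> c * ln (1 - \<eta>)"
    by (intro mult_left_mono) auto
  with upper have gain: "R * (\<eta> / m) - ln N \<le> c * (\<eta> * (1 + \<epsilon> / 2))"
    by simp
  have "2 * (R * \<eta> - m * ln N) \<le> m * c * \<eta> * (2 + \<epsilon>)"
    using mult_left_mono[OF gain, of "2 * m"] m by (simp add: algebra_simps)
  then have "(1 + \<epsilon>) * (2 * (R * \<eta> - m * ln N)) \<le> (1 + \<epsilon>) * (m * c * \<eta> * (2 + \<epsilon>))"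
    using \<epsilon> by (intro mult_left_mono) auto
  then have "R * \<eta> * (2 + \<epsilon>) \<le> ((1 + \<epsilon>) * m * c) * \<eta> * (2 + \<epsilon>)"
    using R by (simp add: algebra_simps)
  then show ?thesis using \<eta> \<epsilon> by (simp add: mult_le_cancel_right_pos)
qed

lemma multiplicative_weights_cover:
  fixes F :: "'b set" and A :: "'c \<Rightarrow> 'b \<Rightarrow> bool" and m \<epsilon> :: real
  assumes F: "finite F" "F \<noteq> {}" and m: "m \<ge> 1" and \<epsilon>: "\<epsilon> > 0"
    and good: "\<And>W. \<forall>y\<in>F. W y > 0 \<Longrightarrow> \<exists>z. (\<Sum>y\<in>F. W y) / m \<le> (\<Sum>y\<in>F. if A z y then W y else 0)"
  shows "\<exists>R>0. \<exists>zs::nat \<Rightarrow> 'c. \<forall>y\<in>F. real R \<le> (1 + \<epsilon>) * m * real (card {t\<in>{..<R}. A (zs t) y})"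
proof -
  obtain pick where pick: "\<And>W. \<forall>y\<in>F. W y > 0 \<Longrightarrow> (\<Sum>y\<in>F. W y) / m \<le> (\<Sum>y\<in>F. if A (pick W) y then W y else 0)"
    using good by metis
  define \<eta> where "\<eta> = min (1/2) (\<epsilon> / 4)"
  have \<eta>: "0 < \<eta>" "\<eta> \<le> 1/2" "4 * \<eta> \<le> \<epsilon>" using \<epsilon> by (auto simp: \<eta>_def)
  have N: "card F \<ge> 1" using F by (simp add: Suc_le_eq card_gt_0_iff)
  obtain R :: nat where R: "2 * m * (1 + \<epsilon>) * ln (card F) / (\<epsilon> * \<eta>) < R"
    using reals_Archimedean2 by blast
  have "0 \<le> 2 * m * (1 + \<epsilon>) * ln (card F) / (\<epsilon> * \<eta>)"
    using m \<epsilon> \<eta> N by (intro divide_nonneg_pos mult_nonneg_nonneg) auto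
  then have R_pos: "R > 0" using R by linarith
  define zs where "zs t = pick (mw_weights \<eta> pick A t)" for t
  have "real R \<le> (1 + \<epsilon>) * m * real (card {t\<in>{..<R}. A (zs t) y})" if y: "y \<in> F" for y
  proof (rule mw_rounds_le_hits[OF m \<epsilon> \<eta> N])
    show "2 * m * (1 + \<epsilon>) * ln (card F) \<le> real R * \<epsilon> * \<eta>"
      using R \<epsilon> \<eta> by (simp add: field_simps)
    have "mw_weights \<eta> pick A R y \<le> (\<Sum>y\<in>F. mw_weights \<eta> pick A R y)"
      using F y \<eta> by (intro member_le_sum) (simp_all add: mw_weights_eq)
    also have "\<dots> \<le> card F * (1 - \<eta> / m) ^ R"
      using \<eta> by (intro mw_weights_sum_le[OF F(1) m _ _ pick]) auto
    finally show "(1 - \<eta>) ^ card {t\<in>{..<R}. A (zs t) y} \<le> card F * (1 - \<eta> / m) ^ R"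
      by (simp add: mw_weights_eq zs_def)
  qed
  then show ?thesis using R_pos by blast
qed

section \<open>Encoding a cube into the unit interval\<close>

definition digit_reader :: "real \<Rightarrow> real" where
  "digit_reader s = min 1 (max 0 (1/2 - cos (2 * pi * s)))"

definition bin_digit :: "nat \<Rightarrow> real \<Rightarrow> bool" where
  "bin_digit i x \<longleftrightarrow> \<lfloor>2 ^ Suc i * x\<rfloor> - 2 * \<lfloor>2 ^ i * x\<rfloor> = 1"

text \<open>Base-4 expansion with digits in {0, 2}: the gaps between admissible digits are what
  lets the continuous function digit_reader read digits back.\<close>
definition quaternary_code :: "(nat \<Rightarrow> bool) \<Rightarrow> real" where
  "quaternary_code d = (\<Sum>q. 2 * of_bool (d q) / 4 ^ Suc q)"

definition coord_decode :: "nat \<Rightarrow> nat \<Rightarrow> real \<Rightarrow> real" where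
  "coord_decode n c t = (\<Sum>i. digit_reader (4 ^ (n * i + c) * t) / 2 ^ Suc i)"

lemma digit_reader_bounds: "0 \<le> digit_reader s" "digit_reader s \<le> 1"
  unfolding digit_reader_def by auto

lemma continuous_on_digit_reader: "continuous_on UNIV digit_reader"
  unfolding digit_reader_def by (intro continuous_intros)

lemma summable_digits:
  fixes d :: "nat \<Rightarrow> bool" and k :: nat
  shows "summable (\<lambda>q. 2 * of_bool (d q) / 4 ^ (q + k) :: real)"
proof (rule summable_comparison_test)
  show "summable (\<lambda>q. 2 * (1/4) ^ q :: real)" by (intro summable_mult summable_geometric) simp
  show "\<exists>N. \<forall>q\<ge>N. norm (2 * of_bool (d q) / 4 ^ (q + k) :: real) \<le> 2 * (1/4) ^ q"
    by (auto simp: power_add power_one_over divide_simps)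
qed

lemma quaternary_tail_bounds:
  fixes d :: "nat \<Rightarrow> bool"
  shows "0 \<le> (\<Sum>q. 2 * of_bool (d q) / 4 ^ (q + 2) :: real)"
    and "(\<Sum>q. 2 * of_bool (d q) / 4 ^ (q + 2) :: real) \<le> 1/6"
proof -
  show "0 \<le> (\<Sum>q. 2 * of_bool (d q) / 4 ^ (q + 2) :: real)"
    by (intro suminf_nonneg summable_digits) simp
  have "(\<Sum>q. 2 * of_bool (d q) / 4 ^ (q + 2) :: real) \<le> (\<Sum>q. (1/8) * (1/4) ^ q)"
    by (intro suminf_le summable_digits summable_mult summable_geometric)
       (auto simp: power_add power_one_over divide_simps)
  also have "\<dots> = 1/6"
    using suminf_mult[of "\<lambda>q. (1/4::real) ^ q" "1/8"] suminf_geometric[of "1/4::real"] by simp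
  finally show "(\<Sum>q. 2 * of_bool (d q) / 4 ^ (q + 2) :: real) \<le> 1/6" .
qed

lemma quaternary_code_bounds: "0 \<le> quaternary_code d" "quaternary_code d \<le> 1"
proof -
  have "quaternary_code d = 4 * (\<Sum>q. 2 * of_bool (d q) / 4 ^ (q + 2))"
    unfolding quaternary_code_def using summable_digits[of d 2]
    by (subst suminf_mult[symmetric]) (simp_all add: divide_simps)
  then show "0 \<le> quaternary_code d" "quaternary_code d \<le> 1"
    using quaternary_tail_bounds[of d] by simp_all
qed

lemma quaternary_code_scaled:
  "\<exists>I::int. 4 ^ p * quaternary_code d =
     I + of_bool (d p) / 2 + (\<Sum>q. 2 * of_bool (d (q + Suc p)) / 4 ^ (q + 2))"
proof -
  define a :: "nat \<Rightarrow> real" where "a q = 4 ^ p * (2 * of_bool (d q) / 4 ^ Suc q)" for q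
  define I :: int where "I = (\<Sum>q<p. 2 * of_bool (d q) * 4 ^ (p - Suc q))"
  have "summable a"
    unfolding a_def using summable_digits[of d 1] by (intro summable_mult) simp
  have "4 ^ p * quaternary_code d = (\<Sum>q. a q)"
    unfolding quaternary_code_def a_def using summable_digits[of d 1] by (subst suminf_mult) simp_all
  also have "\<dots> = (\<Sum>q. a (q + Suc p)) + (\<Sum>q<Suc p. a q)"
    by (rule suminf_split_initial_segment[OF \<open>summable a\<close>])
  also have "(\<Sum>q. a (q + Suc p)) = (\<Sum>q. 2 * of_bool (d (q + Suc p)) / 4 ^ (q + 2))"
    by (simp add: a_def power_add)
  also have "(\<Sum>q<Suc p. a q) = of_int I + of_bool (d p) / 2"
  proof -
    have "a q = of_int (2 * of_bool (d q) * 4 ^ (p - Suc q))" if "q < p" for q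
    proof -
      have "p = (p - Suc q) + Suc q" using that by simp
      then have "(4::real) ^ p = 4 ^ (p - Suc q) * 4 ^ Suc q" by (metis power_add)
      then show ?thesis by (simp add: a_def)
    qed
    then show ?thesis by (simp add: I_def of_int_sum a_def)
  qed
  finally show ?thesis by (intro exI[of _ I]) (simp add: algebra_simps)
qed

lemma digit_reader_quaternary_code: "digit_reader (4 ^ p * quaternary_code d) = of_bool (d p)"
proof -
  define r where "r = (\<Sum>q. 2 * of_bool (d (q + Suc p)) / 4 ^ (q + 2) :: real)"
  have r: "0 \<le> r" "r \<le> 1/6"
    unfolding r_def by (rule quaternary_tail_bounds)+
  obtain I :: int where "4 ^ p * quaternary_code d = I + (of_bool (d p) / 2 + r)"
    using quaternary_code_scaled[of p d] unfolding r_def by (auto simp: add.assoc)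
  then have "cos (2 * pi * (4 ^ p * quaternary_code d)) = cos (2 * pi * (of_bool (d p) / 2 + r))"
    using cos.plus_of_int[of "2 * pi * (of_bool (d p) / 2 + r)" I] by (simp add: algebra_simps)
  moreover have "1/2 \<le> cos (2 * pi * r)"
    using cos_monotone_0_pi_le[of "2 * pi * r" "pi / 3"] r by (simp add: cos_60)
  moreover have "cos (2 * pi * (1/2 + r)) = - cos (2 * pi * r)"
    by (simp add: algebra_simps)
  ultimately show ?thesis
    unfolding digit_reader_def by (cases "d p") simp_all
qed

lemma floor_double_diff: "\<lfloor>2 * (y::real)\<rfloor> - 2 * \<lfloor>y\<rfloor> \<in> {0, 1}"
proof -
  have "2 * \<lfloor>y\<rfloor> \<le> \<lfloor>2 * y\<rfloor>" by (simp add: le_floor_iff)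
  moreover have "\<lfloor>2 * y\<rfloor> < 2 * \<lfloor>y\<rfloor> + 2" by (simp add: floor_less_iff) linarith
  ultimately show ?thesis by auto
qed

lemma of_bool_bin_digit: "of_bool (bin_digit i x) = (of_int (\<lfloor>2 ^ Suc i * x\<rfloor> - 2 * \<lfloor>2 ^ i * x\<rfloor>) :: real)"
  using floor_double_diff[of "2 ^ i * x"] unfolding bin_digit_def by (auto simp: mult.assoc)

lemma bin_digit_partial_sum:
  assumes "0 \<le> x" "x < 1"
  shows "(\<Sum>i<N. of_bool (bin_digit i x) / 2 ^ Suc i) = (of_int \<lfloor>2 ^ N * x\<rfloor> / 2 ^ N :: real)"
proof (induction N)
  case 0
  then show ?case using assms by (simp add: floor_eq_iff)
next
  case (Suc N)
  then show ?case unfolding of_bool_bin_digit by (simp add: field_simps)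
qed

lemma bin_digit_sums:
  assumes "0 \<le> x" "x < 1"
  shows "(\<lambda>i. of_bool (bin_digit i x) / 2 ^ Suc i :: real) sums x"
  unfolding sums_def bin_digit_partial_sum[OF assms]
proof (rule tendsto_sandwich[of "\<lambda>N. x - (1/2) ^ N" _ _ "\<lambda>N. x"])
  have "x - (1/2) ^ N \<le> of_int \<lfloor>2 ^ N * x\<rfloor> / 2 ^ N" for N :: nat
  proof -
    have "(2 ^ N * x - 1) / 2 ^ N \<le> of_int \<lfloor>2 ^ N * x\<rfloor> / 2 ^ N"
      by (intro divide_right_mono) (linarith, simp)
    moreover have "(2 ^ N * x - 1) / 2 ^ N = x - (1/2) ^ N"
      by (simp add: field_simps power_one_over)
    ultimately show ?thesis by simp
  qed
  then show "\<forall>\<^sub>F N in sequentially. x - (1/2) ^ N \<le> of_int \<lfloor>2 ^ N * x\<rfloor> / 2 ^ N"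
    by simp
  have "of_int \<lfloor>2 ^ N * x\<rfloor> / 2 ^ N \<le> x" for N :: nat
    by (simp add: pos_divide_le_eq mult.commute)
  then show "\<forall>\<^sub>F N in sequentially. of_int \<lfloor>2 ^ N * x\<rfloor> / 2 ^ N \<le> x"
    by simp
  show "(\<lambda>N. x - (1/2) ^ N) \<longlonglongrightarrow> x"
    using tendsto_diff[OF tendsto_const LIMSEQ_power_zero[of "1/2::real"]] by simp
qed simp

lemma continuous_on_coord_decode: "continuous_on UNIV (coord_decode n c)"
proof (rule uniform_limit_theorem)
  show "uniform_limit UNIV (\<lambda>N t. \<Sum>i<N. digit_reader (4 ^ (n * i + c) * t) / 2 ^ Suc i) (coord_decode n c) sequentially"
    unfolding coord_decode_def
  proof (rule Weierstrass_m_test)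
    show "norm (digit_reader (4 ^ (n * i + c) * t) / 2 ^ Suc i) \<le> (1/2) ^ Suc i" for i t
      using digit_reader_bounds[of "4 ^ (n * i + c) * t"] by (simp add: power_one_over divide_simps)
    show "summable (\<lambda>i. (1/2::real) ^ Suc i)"
      using summable_geometric[of "1/2::real"] by (simp add: summable_Suc_iff)
  qed
  have "continuous_on UNIV (\<lambda>t. digit_reader (4 ^ (n * i + c) * t) / 2 ^ Suc i)" for i
    by (intro continuous_intros continuous_on_compose2[OF continuous_on_digit_reader]) auto
  then show "\<forall>\<^sub>F N in sequentially. continuous_on UNIV (\<lambda>t. \<Sum>i<N. digit_reader (4 ^ (n * i + c) * t) / 2 ^ Suc i)"
    by (intro always_eventually allI continuous_on_sum) auto
qed simp

text \<open>Digit p of the code carries binary digit p div n of coordinate p mod n.\<close>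
lemma coord_decode_quaternary_code:
  assumes c: "c < n" and d: "\<And>p. d p = bin_digit (p div n) (u (p mod n))" and u: "0 \<le> u c" "u c < 1"
  shows "coord_decode n c (quaternary_code d) = u c"
proof -
  have "(n * i + c) div n = i" "(n * i + c) mod n = c" for i
    using c by auto
  then have "coord_decode n c (quaternary_code d) = (\<Sum>i. of_bool (bin_digit i (u c)) / 2 ^ Suc i)"
    unfolding coord_decode_def digit_reader_quaternary_code d by simp
  also have "\<dots> = u c" using bin_digit_sums[OF u] by (rule sums_unique[symmetric])
  finally show ?thesis .
qed

text \<open>Interleaving the binary digits of the coordinates into a single base-4 expansion gives a
  map of the cube into [0, 1] with a continuous left inverse.\<close>
lemma continuous_decoding_exists:
  fixes R :: real
  assumes R: "R > 0"
  obtains dec :: "real \<Rightarrow> 'a::euclidean_space" and enc :: "'a \<Rightarrow> real"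
  where "continuous_on UNIV dec" and "\<And>z. enc z \<in> {0..1}"
    and "\<And>z. (\<forall>b\<in>Basis. \<bar>z \<bullet> b\<bar> < R) \<Longrightarrow> dec (enc z) = z"
proof -
  define n where "n = DIM('a)"
  obtain idx where idx: "bij_betw idx (Basis :: 'a set) {0..<n}"
    using ex_bij_betw_finite_nat[of "Basis :: 'a set"] unfolding n_def by auto
  define b_of where "b_of = inv_into (Basis :: 'a set) idx"
  define u where "u z j = (z \<bullet> b_of j + R) / (2 * R)" for z :: 'a and j
  define enc where "enc z = quaternary_code (\<lambda>p. bin_digit (p div n) (u z (p mod n)))" for z
  define dec where "dec t = (\<Sum>b\<in>Basis. (2 * R * coord_decode n (idx b) t - R) *\<^sub>R b)" for t
  have cont: "continuous_on UNIV dec"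
    unfolding dec_def
    by (intro continuous_intros continuous_on_compose2[OF continuous_on_coord_decode]) auto
  have range: "enc z \<in> {0..1}" for z
    unfolding enc_def using quaternary_code_bounds by auto
  have inverse: "dec (enc z) = z" if z: "\<forall>b\<in>Basis. \<bar>z \<bullet> b\<bar> < R" for z
  proof -
    have "2 * R * coord_decode n (idx b) (enc z) - R = z \<bullet> b" if b: "b \<in> Basis" for b
    proof -
      have c: "idx b < n" and bi: "b_of (idx b) = b"
        using idx b by (auto simp: bij_betw_def b_of_def)
      have "0 \<le> u z (idx b)" "u z (idx b) < 1"
        unfolding u_def bi using z b R by (auto simp: field_simps)
      then have "coord_decode n (idx b) (enc z) = u z (idx b)"
        unfolding enc_def using c by (intro coord_decode_quaternary_code) simp_all
      then show ?thesis unfolding u_def bi using R by (simp add: field_simps)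
    qed
    then have "dec (enc z) = (\<Sum>b\<in>Basis. (z \<bullet> b) *\<^sub>R b)"
      unfolding dec_def by simp
    then show ?thesis by (simp add: euclidean_representation)
  qed
  show ?thesis by (rule that[OF cont range inverse])
qed

section \<open>Weak limits of bounded point lists\<close>

text \<open>The closed-set half of the portmanteau theorem, via the continuous functions
  max 0 (1 - j * infdist t C) decreasing to the indicator of C.\<close>
lemma weak_conv_closed_lower_bound:
  fixes \<mu> :: "nat \<Rightarrow> real measure"
  assumes \<mu>: "\<And>n. real_distribution (\<mu> n)" and M: "real_distribution M"
    and conv: "weak_conv_m \<mu> M" and C: "closed C"
    and bound: "\<forall>\<^sub>F n in sequentially. a \<le> measure (\<mu> n) C"
  shows "a \<le> measure M C"
proof (cases "C = {}")
  case True
  then show ?thesis using bound by (auto dest: eventually_happens)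
next
  case False
  interpret M: real_distribution M by fact
  define f where "f j t = max 0 (1 - real j * infdist t C)" for j :: nat and t :: real
  have f_cont: "continuous_on UNIV (f j)" for j
    unfolding f_def by (intro continuous_intros continuous_on_infdist continuous_on_id)
  have f_bound: "norm (f j t) \<le> 1" for j t
    unfolding f_def using infdist_nonneg[of t C] by auto
  have f_meas: "f j \<in> borel_measurable borel" for j
    using f_cont by (rule borel_measurable_continuous_onI)
  have C_meas: "indicator C \<in> borel_measurable borel"
    using C by (simp add: borel_closed)
  have "a \<le> integral\<^sup>L M (f j)" for j
  proof (rule tendsto_lowerbound)
    show "(\<lambda>n. integral\<^sup>L (\<mu> n) (f j)) \<longlonglongrightarrow> integral\<^sup>L M (f j)"
      using f_cont f_bound
      by (intro weak_conv_imp_integral_bdd_continuous_conv[OF \<mu> M conv])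
         (auto simp: continuous_on_eq_continuous_at)
    show "\<forall>\<^sub>F n in sequentially. a \<le> integral\<^sup>L (\<mu> n) (f j)"
      using bound
    proof eventually_elim
      case (elim n)
      interpret real_distribution "\<mu> n" by (rule \<mu>)
      have "indicator C t \<le> f j t" for t
        by (cases "t \<in> C") (auto simp: f_def)
      moreover have "indicator C \<in> borel_measurable (\<mu> n)" "f j \<in> borel_measurable (\<mu> n)"
        using C_meas f_meas by (simp_all add: measurable_cong_sets[OF events_eq_borel refl])
      ultimately have "integral\<^sup>L (\<mu> n) (indicator C) \<le> integral\<^sup>L (\<mu> n) (f j)"
        using f_bound by (intro integral_mono integrable_const_bound[where B=1]) auto
      then show ?case using elim C by (simp add: borel_closed)
    qed
  qed simp
  moreover have "(\<lambda>j. integral\<^sup>L M (f j)) \<longlonglongrightarrow> integral\<^sup>L M (indicator C)"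
  proof (rule integral_dominated_convergence[where w="\<lambda>_. 1"])
    show "AE x in M. (\<lambda>j. f j x) \<longlonglongrightarrow> indicator C x"
    proof (rule AE_I2)
      fix x
      show "(\<lambda>j. f j x) \<longlonglongrightarrow> indicator C x"
      proof (cases "x \<in> C")
        case False
        then have d: "infdist x C > 0"
          using in_closed_iff_infdist_zero[OF C \<open>C \<noteq> {}\<close>] infdist_nonneg[of x C] by auto
        obtain N :: nat where "1 / infdist x C < N" using reals_Archimedean2 by blast
        then have N: "1 < real N * infdist x C" using d by (simp add: divide_less_eq)
        have "f j x = 0" if "N \<le> j" for j
        proof -
          have "real N * infdist x C \<le> real j * infdist x C" using that d by (intro mult_right_mono) auto
          then show ?thesis using N by (simp add: f_def)
        qed
        then have "(\<lambda>j. f j x) \<longlonglongrightarrow> 0"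
          by (intro tendsto_eventually) (auto simp: eventually_sequentially)
        then show ?thesis using False by simp
      qed (simp add: f_def)
    qed
  qed (use f_meas f_bound C_meas in \<open>auto simp: measurable_cong_sets[OF M.events_eq_borel refl]\<close>)
  ultimately have "a \<le> integral\<^sup>L M (indicator C)"
    by (intro tendsto_lowerbound) auto
  then show ?thesis using C by (simp add: borel_closed)
qed

lemma measure_distr_pmf_of_set:
  assumes "finite S" "S \<noteq> {}" "E \<in> sets borel"
  shows "measure (distr (measure_pmf (pmf_of_set S)) borel f) E = card {t\<in>S. f t \<in> E} / card S"
proof -
  have "measure (distr (measure_pmf (pmf_of_set S)) borel f) E = measure (pmf_of_set S) (f -` E)"
    using assms(3) by (subst measure_distr) auto
  also have "\<dots> = card (S \<inter> f -` E) / card S"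
    using assms by (simp add: measure_pmf_of_set)
  also have "S \<inter> f -` E = {t\<in>S. f t \<in> E}" by auto
  finally show ?thesis .
qed

lemma tight_uniform_unit_interval:
  fixes f :: "nat \<Rightarrow> nat \<Rightarrow> real"
  assumes R: "\<And>k. R k > 0" and f: "\<And>k t. f k t \<in> {0..1}"
  shows "tight (\<lambda>k. distr (measure_pmf (pmf_of_set {..<R k})) borel (f k))"
  unfolding tight_def
proof (intro conjI allI impI)
  show "real_distribution (distr (measure_pmf (pmf_of_set {..<R k})) borel (f k))" for k
    unfolding real_distribution_def real_distribution_axioms_def
    by (auto intro!: measure_pmf.prob_space_distr)
  have "f k t \<in> {-1<..1}" for k t
    using f[of k t] by simp
  then have all_in: "{t\<in>{..<R k}. f k t \<in> {-1<..1}} = {..<R k}" for k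
    by blast
  have "measure (distr (measure_pmf (pmf_of_set {..<R k})) borel (f k)) {-1<..1} = 1" for k
    using R[of k] by (subst measure_distr_pmf_of_set) (simp_all only: all_in, auto)
  then show "\<exists>a b. a < b \<and> (\<forall>k. 1 - \<epsilon> < measure (distr (measure_pmf (pmf_of_set {..<R k})) borel (f k)) {a<..b})"
    if "\<epsilon> > 0" for \<epsilon> :: real
    using that by (intro exI[of _ "-1"] exI[of _ 1]) simp
qed

text \<open>Helly's selection theorem only exists on the real line, so the bounded point lists are
  transported there by a map with a continuous left inverse.\<close>
lemma bounded_empirical_measures_converge:
  fixes zs :: "nat \<Rightarrow> nat \<Rightarrow> 'a::euclidean_space" and R :: "nat \<Rightarrow> nat"
  assumes R: "\<And>k. R k > 0" and bounded: "\<And>k t. norm (zs k t) \<le> B"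
  obtains P r where "prob_space P" "sets P = sets borel" "strict_mono r"
    and "\<And>C a. closed C \<Longrightarrow>
      \<forall>\<^sub>F n in sequentially. a \<le> card {t\<in>{..<R (r n)}. zs (r n) t \<in> C} / R (r n) \<Longrightarrow>
      a \<le> measure P C"
proof -
  have "B + 1 > 0" using bounded[of 0 0] norm_ge_zero[of "zs 0 0"] by linarith
  obtain dec :: "real \<Rightarrow> 'a" and enc :: "'a \<Rightarrow> real" where
    dec: "continuous_on UNIV dec" and enc: "\<And>z. enc z \<in> {0..1}"
    and dec_enc: "\<And>z. (\<forall>b\<in>Basis. \<bar>z \<bullet> b\<bar> < B + 1) \<Longrightarrow> dec (enc z) = z"
    using continuous_decoding_exists[OF \<open>B + 1 > 0\<close>] by metis
  have dec_enc_zs: "dec (enc (zs k t)) = zs k t" for k t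
    using Basis_le_norm bounded by (intro dec_enc) (fastforce intro: le_less_trans)
  define \<rho> where "\<rho> k = distr (measure_pmf (pmf_of_set {..<R k})) borel (\<lambda>t. enc (zs k t))" for k
  have "tight \<rho>"
    unfolding \<rho>_def using enc by (intro tight_uniform_unit_interval R)
  then have \<rho>: "real_distribution (\<rho> k)" for k
    by (simp add: tight_def)
  have measure_\<rho>: "measure (\<rho> k) E = card {t\<in>{..<R k}. enc (zs k t) \<in> E} / R k"
    if "E \<in> sets borel" for k E
    unfolding \<rho>_def using R[of k] that by (subst measure_distr_pmf_of_set) auto
  from \<open>tight \<rho>\<close> obtain r M where r: "strict_mono r" and M: "real_distribution M" and conv: "weak_conv_m (\<rho> \<circ> id \<circ> r) M"
    using tight_imp_convergent_subsubsequence[OF _ strict_mono_id] by blast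
  interpret M: real_distribution M by (rule M)
  have dec_meas: "dec \<in> borel_measurable M"
    using dec by (simp add: borel_measurable_continuous_onI measurable_cong_sets[OF M.events_eq_borel refl])
  define P where "P = distr M borel dec"
  show ?thesis
  proof (rule that)
    show "prob_space P" unfolding P_def using dec_meas by (rule M.prob_space_distr)
    show "sets P = sets borel" by (simp add: P_def)
    show "strict_mono r" by (rule r)
    fix C a assume C: "closed C"
      and bound: "\<forall>\<^sub>F n in sequentially. a \<le> card {t\<in>{..<R (r n)}. zs (r n) t \<in> C} / R (r n)"
    have closed: "closed (dec -` C)" using closed_vimage[OF C dec] by simp
    have "a \<le> measure M (dec -` C)"
    proof (rule weak_conv_closed_lower_bound[OF _ M conv closed])
      show "real_distribution ((\<rho> \<circ> id \<circ> r) n)" for n using \<rho> by simp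
      show "\<forall>\<^sub>F n in sequentially. a \<le> measure ((\<rho> \<circ> id \<circ> r) n) (dec -` C)"
        using bound closed by (simp add: measure_\<rho> borel_closed dec_enc_zs)
    qed
    then show "a \<le> measure P C"
      unfolding P_def using dec_meas C by (simp add: measure_distr borel_closed)
  qed
qed

lemma measure_closed_ge_thickenings:
  fixes S :: "'a::euclidean_space set"
  assumes P: "finite_measure P" "sets P = sets borel" and S: "closed S" "S \<noteq> {}"
    and bound: "\<And>j. a \<le> measure P {z. infdist z S \<le> inverse (Suc j)}"
  shows "a \<le> measure P S"
proof -
  interpret finite_measure P by (rule P)
  define Th where "Th j = {z. infdist z S \<le> inverse (Suc j)}" for j
  have Th_closed: "closed (Th j)" for j
    unfolding Th_def by (intro closed_Collect_le continuous_intros continuous_on_infdist) auto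
  have "inverse (real (Suc n)) \<le> inverse (real (Suc m))" if "m \<le> n" for m n
    using that by (intro le_imp_inverse_le) auto
  then have "decseq Th"
    unfolding Th_def decseq_def by (auto intro: order_trans)
  moreover have "(\<Inter>j. Th j) = S"
  proof (intro equalityI subsetI)
    fix z assume "z \<in> (\<Inter>j. Th j)"
    then have "infdist z S \<le> 0"
      using LIMSEQ_le_const[OF LIMSEQ_inverse_real_of_nat, of "infdist z S"] by (auto simp: Th_def)
    then show "z \<in> S" using in_closed_iff_infdist_zero[OF S] infdist_nonneg[of z S] by simp
  qed (simp add: Th_def)
  moreover have "range Th \<subseteq> sets P"
    using Th_closed P(2) by (auto simp: borel_closed)
  ultimately have "(\<lambda>j. measure P (Th j)) \<longlonglongrightarrow> measure P S"
    using finite_Lim_measure_decseq[of Th] by simp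
  then show ?thesis
    using bound by (intro LIMSEQ_le_const) (auto simp: Th_def)
qed

section \<open>Packing values and approximate covers\<close>

lemma M_omega_upper:
  fixes K T :: "'a::euclidean_space set"
  assumes "finite S" "\<forall>x\<in>S. 0 \<le> w x" "\<forall>y. (\<Sum>x\<in>S. w x * indicator T (y - x)) \<le> 1"
  shows "ennreal (\<Sum>x\<in>S \<inter> K. w x) \<le> M_omega K T"
  unfolding M_omega_def using assms
  by (intro SUP_upper2[where i="(S, w)"]) auto

lemma one_le_M_omega:
  fixes K T :: "'a::euclidean_space set"
  assumes "y \<in> K"
  shows "1 \<le> M_omega K T"
  using M_omega_upper[of "{y}" "\<lambda>_. 1" T K] assms by (simp add: indicator_le_1)

text \<open>The covering oracle for the multiplicative weights method: if no translate of T caught a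
  1/m fraction of the weight, rescaling the weights would give a packing of mass above M_omega.\<close>
lemma M_omega_heavy_translate:
  fixes K T :: "'a::euclidean_space set" and m :: real
  assumes M_omega: "M_omega K T = ennreal m" and m: "m > 0"
    and F: "finite F" "F \<subseteq> K" "F \<noteq> {}" and T: "T \<noteq> {}"
    and W: "\<forall>y\<in>F. W y > 0"
  shows "\<exists>z. (\<Sum>y\<in>F. W y) / m \<le> (\<Sum>y\<in>F. if z - y \<in> T then W y else 0)"
proof (rule ccontr)
  assume "\<not> ?thesis"
  then have light: "(\<Sum>y\<in>F. if z - y \<in> T then W y else 0) < (\<Sum>y\<in>F. W y) / m" for z
    by (simp add: not_le)
  define v where "v z = (\<Sum>y\<in>F. if z - y \<in> T then W y else 0)" for z
  have "range v \<subseteq> (\<lambda>P. \<Sum>y\<in>P. W y) ` Pow F"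
    using F(1) by (auto simp: v_def sum.If_cases Int_def)
  then have "finite (range v)"
    by (rule finite_subset) (simp add: F(1))
  define s where "s = Max (range v)"
  have v_le: "v z \<le> s" for z
    unfolding s_def using \<open>finite (range v)\<close> by (intro Max_ge) auto
  have "s \<in> range v"
    unfolding s_def using \<open>finite (range v)\<close> by (intro Max_in) auto
  then obtain z0 where "v z0 = s" by auto
  then have s_light: "s < (\<Sum>y\<in>F. W y) / m" using light[of z0] by (simp add: v_def)
  obtain y0 t0 where y0: "y0 \<in> F" and t0: "t0 \<in> T" using F T by auto
  have "W y0 = (if (y0 + t0) - y0 \<in> T then W y0 else 0)" using t0 by simp
  also have "\<dots> \<le> v (y0 + t0)"
    unfolding v_def using F(1) y0 W by (intro member_le_sum) (auto simp: less_imp_le)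
  finally have "W y0 \<le> v (y0 + t0)" .
  then have s_pos: "s > 0" using v_le[of "y0 + t0"] W y0 by fastforce
  have "ennreal (\<Sum>y\<in>F \<inter> K. W y / s) \<le> M_omega K T"
  proof (rule M_omega_upper)
    show "\<forall>x\<in>F. 0 \<le> W x / s" using W s_pos by (auto simp: less_imp_le)
    have "(\<Sum>x\<in>F. W x / s * indicator T (y - x)) = v y / s" for y
      unfolding v_def sum_divide_distrib by (intro sum.cong) (auto simp: indicator_def)
    then show "\<forall>y. (\<Sum>x\<in>F. W x / s * indicator T (y - x)) \<le> 1"
      using v_le s_pos by simp
  qed fact
  moreover have "F \<inter> K = F" using F by auto
  ultimately have "(\<Sum>y\<in>F. W y) / s \<le> m"
    using m M_omega by (simp add: sum_divide_distrib[symmetric])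
  then show False
    using s_light s_pos m by (simp add: field_simps)
qed

lemma M_omega_approximate_cover:
  fixes K T :: "'a::euclidean_space set" and m e \<epsilon> :: real
  assumes K: "compact K" "K \<noteq> {}" and T: "T \<noteq> {}"
    and M_omega: "M_omega K T = ennreal m" and m: "m \<ge> 1" and e: "e > 0" and \<epsilon>: "\<epsilon> > 0"
  shows "\<exists>R zs. R > (0::nat) \<and> (\<forall>t. \<exists>y\<in>K. zs t - y \<in> T) \<and>
    (\<forall>x\<in>K. \<exists>y. dist y x < e \<and> real R \<le> (1 + \<epsilon>) * m * card {t\<in>{..<R}. zs t - y \<in> T})"
proof -
  have "K \<subseteq> (\<Union>x\<in>K. ball x e)" using e by auto
  then obtain F where F: "F \<subseteq> K" "finite F" "K \<subseteq> (\<Union>x\<in>F. ball x e)"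
    using compactE_image[OF K(1), of K "\<lambda>x. ball x e"] by blast
  have "F \<noteq> {}" using F K(2) by auto
  have "\<exists>z. (\<Sum>y\<in>F. W y) / m \<le> (\<Sum>y\<in>F. if z - y \<in> T then W y else 0)" if "\<forall>y\<in>F. W y > 0" for W
    using M_omega_heavy_translate[OF M_omega _ F(2,1) \<open>F \<noteq> {}\<close> T that] m by simp
  then obtain R zs where R: "R > 0"
    and cover: "\<forall>y\<in>F. real R \<le> (1 + \<epsilon>) * m * card {t\<in>{..<R}. zs t - y \<in> T}"
    using multiplicative_weights_cover[OF F(2) \<open>F \<noteq> {}\<close> m \<epsilon>, where A="\<lambda>z y. z - y \<in> T"] by blast
  obtain y0 t0 where "y0 \<in> K" "t0 \<in> T" using K T by auto
  \<comment> \<open>translates missing K are useless; moving them next to K keeps the points bounded\<close>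
  define zs' where "zs' t = (if \<exists>y\<in>K. zs t - y \<in> T then zs t else y0 + t0)" for t
  have "\<exists>y\<in>K. zs' t - y \<in> T" for t
    using \<open>y0 \<in> K\<close> \<open>t0 \<in> T\<close> by (auto simp: zs'_def intro!: bexI[of _ y0])
  moreover have "\<exists>y. dist y x < e \<and> real R \<le> (1 + \<epsilon>) * m * card {t\<in>{..<R}. zs' t - y \<in> T}"
    if "x \<in> K" for x
  proof -
    obtain y where y: "y \<in> F" "dist y x < e" using F \<open>x \<in> K\<close> by (force simp: dist_commute)
    have "card {t\<in>{..<R}. zs t - y \<in> T} \<le> card {t\<in>{..<R}. zs' t - y \<in> T}"
      using y F by (intro card_mono) (auto simp: zs'_def)
    then have "(1 + \<epsilon>) * m * card {t\<in>{..<R}. zs t - y \<in> T} \<le> (1 + \<epsilon>) * m * card {t\<in>{..<R}. zs' t - y \<in> T}"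
      using m \<epsilon> by (intro mult_left_mono) auto
    then show ?thesis using cover y by force
  qed
  ultimately show ?thesis using R by blast
qed

lemma card_hits_le_card_thickening:
  fixes zs :: "nat \<Rightarrow> 'a::euclidean_space"
  assumes "dist y x \<le> \<delta>"
  shows "card {t\<in>{..<n}. zs t - y \<in> T} \<le> card {t\<in>{..<n}. zs t \<in> {z. infdist z {z. z - x \<in> T} \<le> \<delta>}}"
proof (intro card_mono subsetI)
  fix t assume "t \<in> {t\<in>{..<n}. zs t - y \<in> T}"
  then have "zs t - y + x \<in> {z. z - x \<in> T}" "t < n" by simp_all
  moreover have "dist (zs t) (zs t - y + x) = dist y x"
    by (simp add: dist_norm algebra_simps)
  ultimately show "t \<in> {t\<in>{..<n}. zs t \<in> {z. infdist z {z. z - x \<in> T} \<le> \<delta>}}"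
    using infdist_le[of "zs t - y + x" "{z. z - x \<in> T}" "zs t"] assms by auto
qed simp

section \<open>The covering measure\<close>

lemma frequency_in_thickening:
  fixes zs :: "nat \<Rightarrow> 'a::euclidean_space"
  assumes y: "dist y x < inverse (Suc k)"
    and cover: "real n \<le> (1 + inverse (Suc k)) * m * card {t\<in>{..<n}. zs t - y \<in> T}"
    and k: "i \<le> k" "j \<le> k" and m: "m > 0" and n: "n > 0"
  shows "1 / ((1 + inverse (Suc i)) * m)
    \<le> card {t\<in>{..<n}. zs t \<in> {z. infdist z {z. z - x \<in> T} \<le> inverse (Suc j)}} / n"
proof -
  define c where "c = (1 + inverse (real (Suc i))) * m"
  have c: "c > 0" unfolding c_def using m by (simp add: add_pos_nonneg)
  have inv: "inverse (real (Suc k)) \<le> inverse (Suc i)" "inverse (real (Suc k)) \<le> inverse (Suc j)"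
    using k by (auto intro!: le_imp_inverse_le)
  then have "dist y x \<le> inverse (Suc j)" using y by linarith
  then have "card {t\<in>{..<n}. zs t - y \<in> T}
      \<le> card {t\<in>{..<n}. zs t \<in> {z. infdist z {z. z - x \<in> T} \<le> inverse (Suc j)}}"
    by (rule card_hits_le_card_thickening)
  moreover have "(1 + inverse (Suc k)) * m \<le> c"
    unfolding c_def using inv m by (intro mult_right_mono) auto
  ultimately have "(1 + inverse (Suc k)) * m * card {t\<in>{..<n}. zs t - y \<in> T}
      \<le> c * card {t\<in>{..<n}. zs t \<in> {z. infdist z {z. z - x \<in> T} \<le> inverse (Suc j)}}"
    using c by (intro mult_mono) auto
  with cover have "real n \<le> c * card {t\<in>{..<n}. zs t \<in> {z. infdist z {z. z - x \<in> T} \<le> inverse (Suc j)}}"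
    by linarith
  then have "1 / c \<le> card {t\<in>{..<n}. zs t \<in> {z. infdist z {z. z - x \<in> T} \<le> inverse (Suc j)}} / n"
    using c n by (simp add: field_simps)
  then show ?thesis unfolding c_def .
qed
text \<open>A weak limit of the uniform distributions on the approximate covers, scaled by m, is a
  covering measure.\<close>
lemma N_star_le_of_approximate_covers:
  fixes K T :: "'a::euclidean_space set" and zs :: "nat \<Rightarrow> nat \<Rightarrow> 'a"
  assumes T: "closed T" "T \<noteq> {}" and m: "m > 0"
    and R: "\<And>k. R k > 0" and bounded: "\<And>k t. norm (zs k t) \<le> B"
    and cover: "\<And>k x. x \<in> K \<Longrightarrow> \<exists>y. dist y x < inverse (Suc k) \<and>
      real (R k) \<le> (1 + inverse (Suc k)) * m * card {t\<in>{..<R k}. zs k t - y \<in> T}"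
  shows "N_star K (uminus ` T) \<le> ennreal m"
proof -
  obtain P r where P: "prob_space P" "sets P = sets borel" and r: "strict_mono r"
    and limit: "\<And>C a. closed C \<Longrightarrow>
      \<forall>\<^sub>F n in sequentially. a \<le> card {t\<in>{..<R (r n)}. zs (r n) t \<in> C} / R (r n) \<Longrightarrow>
      a \<le> measure P C"
    by (rule bounded_empirical_measures_converge[OF R bounded]) (rule that)
  interpret P: prob_space P by (rule P(1))
  define \<nu> where "\<nu> = density P (\<lambda>_. ennreal m)"
  have sets_\<nu>: "sets \<nu> = sets borel" using P(2) by (simp add: \<nu>_def)
  have emeasure_\<nu>: "emeasure \<nu> A = ennreal (m * measure P A)" if "A \<in> sets borel" for A
    unfolding \<nu>_def using that P(2) m
    by (simp add: emeasure_density_const P.emeasure_eq_measure ennreal_mult)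
  have total: "emeasure \<nu> UNIV = ennreal m"
    using emeasure_\<nu>[of UNIV] P.prob_space sets_eq_imp_space_eq[OF P(2)] by simp
  have "indicator K x \<le> conv_ind \<nu> (uminus ` T) x" for x
  proof (cases "x \<in> K")
    case True
    define S where "S = {z. z - x \<in> T}"
    have "continuous_on UNIV (\<lambda>z::'a. z - x)" by (intro continuous_intros)
    then have "closed S" unfolding S_def using closed_vimage[OF T(1)] by (simp add: vimage_def)
    moreover obtain t where "t \<in> T" using T(2) by blast
    then have "t + x \<in> S" by (simp add: S_def)
    ultimately have S: "closed S" "S \<noteq> {}" by blast+
    have "1 / m \<le> measure P {z. infdist z S \<le> inverse (Suc j)}" for j
    proof -
      have "1 / ((1 + inverse (Suc i)) * m) \<le> measure P {z. infdist z S \<le> inverse (Suc j)}" for i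
      proof (rule limit)
        show "closed {z. infdist z S \<le> inverse (Suc j)}"
          by (intro closed_Collect_le continuous_intros continuous_on_infdist) auto
        show "\<forall>\<^sub>F n in sequentially. 1 / ((1 + inverse (Suc i)) * m)
            \<le> card {t\<in>{..<R (r n)}. zs (r n) t \<in> {z. infdist z S \<le> inverse (Suc j)}} / R (r n)"
          unfolding eventually_sequentially
        proof (intro exI[of _ "max i j"] allI impI)
          fix n assume "max i j \<le> n"
          then have "i \<le> r n" "j \<le> r n" using seq_suble[OF r, of n] by auto
          moreover obtain y where "dist y x < inverse (Suc (r n))"
            and "real (R (r n)) \<le> (1 + inverse (Suc (r n))) * m * card {t\<in>{..<R (r n)}. zs (r n) t - y \<in> T}"
            using cover[OF True] by blast
          ultimately show "1 / ((1 + inverse (Suc i)) * m)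
              \<le> card {t\<in>{..<R (r n)}. zs (r n) t \<in> {z. infdist z S \<le> inverse (Suc j)}} / R (r n)"
            unfolding S_def using m R by (intro frequency_in_thickening)
        qed
      qed
      moreover have "(\<lambda>i. 1 / ((1 + inverse (real (Suc i))) * m)) \<longlonglongrightarrow> 1 / ((1 + 0) * m)"
        using m by (intro tendsto_intros LIMSEQ_inverse_real_of_nat) auto
      ultimately show ?thesis
        by (intro LIMSEQ_le_const2) auto
    qed
    then have "1 / m \<le> measure P S"
      by (rule measure_closed_ge_thickenings[OF P.finite_measure_axioms P(2) S])
    moreover have "conv_ind \<nu> (uminus ` T) x = (\<integral>\<^sup>+ z. indicator S z \<partial>\<nu>)"
      unfolding conv_ind_def indicator_uminus_image_diff by (simp add: S_def indicator_def)
    then have "conv_ind \<nu> (uminus ` T) x = emeasure \<nu> S"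
      using S(1) sets_\<nu> by (simp add: borel_closed)
    ultimately show ?thesis
      using True m S(1) by (simp add: emeasure_\<nu> borel_closed field_simps)
  qed simp
  moreover have "regular_borel \<nu>"
    using sets_\<nu> total by (intro regular_borelI_finite) auto
  ultimately have "N_star K (uminus ` T) \<le> emeasure \<nu> UNIV"
    unfolding N_star_def by (intro INF_lower) auto
  then show ?thesis using total by simp
qed

lemma N_star_le_M_omega:
  fixes K T :: "'a::euclidean_space set"
  assumes K: "compact K" and T: "compact T" "interior T \<noteq> {}"
  shows "N_star K (uminus ` T) \<le> M_omega K T"
proof (cases "K = {}")
  case True
  have "regular_borel (null_measure borel :: 'a measure)"
    by (rule regular_borelI_finite) auto
  then have "N_star K (uminus ` T) \<le> emeasure (null_measure borel :: 'a measure) UNIV"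
    unfolding N_star_def using True by (intro INF_lower) auto
  then show ?thesis by simp
next
  case False
  then obtain x0 where "x0 \<in> K" by blast
  have T_ne: "T \<noteq> {}" using T(2) interior_subset by blast
  show ?thesis
  proof (cases "M_omega K T")
    case (real m)
    note M_omega = \<open>M_omega K T = ennreal m\<close>
    have m: "m \<ge> 1" using one_le_M_omega[OF \<open>x0 \<in> K\<close>, of T] M_omega by simp
    have "\<exists>R zs. R > (0::nat) \<and> (\<forall>t. \<exists>y\<in>K. zs t - y \<in> T) \<and> (\<forall>x\<in>K. \<exists>y. dist y x < inverse (Suc k) \<and>
        real R \<le> (1 + inverse (Suc k)) * m * card {t\<in>{..<R}. zs t - y \<in> T})" for k
      by (rule M_omega_approximate_cover[OF K False T_ne M_omega m]) simp_all
    then have "\<exists>R zs. \<forall>k. R k > (0::nat) \<and> (\<forall>t. \<exists>y\<in>K. zs k t - y \<in> T) \<and>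
        (\<forall>x\<in>K. \<exists>y. dist y x < inverse (Suc k) \<and>
          real (R k) \<le> (1 + inverse (Suc k)) * m * card {t\<in>{..<R k}. zs k t - y \<in> T})"
      by (subst choice_iff[symmetric])+ blast
    then obtain R zs where R: "\<And>k. R k > 0" and near_K: "\<And>k t. \<exists>y\<in>K. zs k t - y \<in> T"
      and cover: "\<And>k x. x \<in> K \<Longrightarrow> \<exists>y. dist y x < inverse (Suc k) \<and>
        real (R k) \<le> (1 + inverse (Suc k)) * m * card {t\<in>{..<R k}. zs k t - y \<in> T}"
      by blast
    obtain BK BT where BK: "\<forall>y\<in>K. norm y \<le> BK" and BT: "\<forall>y\<in>T. norm y \<le> BT"
      using compact_imp_bounded[OF K] compact_imp_bounded[OF T(1)] by (auto simp: bounded_iff)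
    have "norm (zs k t) \<le> BK + BT" for k t
    proof -
      obtain y where "y \<in> K" "zs k t - y \<in> T" using near_K by blast
      then have "norm y \<le> BK" "norm (zs k t - y) \<le> BT" using BK BT by auto
      then show ?thesis using norm_triangle_ineq[of y "zs k t - y"] by simp
    qed
    then have "N_star K (uminus ` T) \<le> ennreal m"
      using m by (intro N_star_le_of_approximate_covers[OF compact_imp_closed[OF T(1)] T_ne _ R _ cover]) auto
    then show ?thesis using M_omega by simp
  qed simp
qed

theorem theorem1p3:
  fixes K T :: "'a::euclidean_space set"
  assumes "compact K" and "compact T" and "interior T \<noteq> {}"
  shows "M_omega K T = M_star K T \<and> M_star K T = N_star K (uminus ` T)"
  using M_omega_le_M_star[OF assms(1,2)] M_star_le_N_star[OF assms] N_star_le_M_omega[OF assms]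
  by (metis order_antisym order_trans)

end
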